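(* Let $(X,\Sigma)$ be a measurable space, $p$ a transition function on it with associated operator $A$ on $ba(X,\Sigma)$, and let $K=\{\mu_1,\dots,\mu_m\}$ be a finitely additive cycle of measures of $A$ of period $m$ whose cyclic measures are pairwise disjoint. For each $i$ let $\mu_i=\mu_i^{ca}+\mu_i^{pfa}$ be the decomposition of $\mu_i$ into a countably additive component $\mu_i^{ca}$ and a purely finitely additive component $\mu_i^{pfa}$. Then these components are also cyclic: $K^{ca}=\{\mu_1^{ca},\dots,\mu_m^{ca}\}$ and $K^{pfa}=\{\mu_1^{pfa},\dots,\mu_m^{pfa}\}$ form cycles (i.e. $A\mu_i^{ca}=\mu_{i+1}^{ca}$, $A\mu_i^{pfa}=\mu_{i+1}^{pfa}$ for $1\le i\le m-1$, $A\mu_m^{ca}=\mu_1^{ca}$, $A\mu_m^{pfa}=\mu_1^{pfa}$); $K$ is the coordinatewise sum $K=K^{ca}+K^{pfa}$; the mean measure of $K$ is uniquely representable as the sum of its countably additive and purely finitely additive components, and these coincide with the mean measures of $K^{ca}$ and $K^{pfa}$ respectively. Moreover the measures of $K^{ca}$ are pairwise disjoint, the measures of $K^{pfa}$ are pairwise disjoint, and every measure from $K^{ca}$ is disjoint with every measure from $K^{pfa}$.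
   Context: $X$ is an arbitrary infinite set and $\Sigma$ a $\sigma$-algebra of subsets of $X$ containing all one-point sets. $ba(X,\Sigma)$ denotes the space of bounded finitely additive real-valued measures on $\Sigma$, ordered setwise. A nonnegative finitely additive measure is purely finitely additive if every countably additive measure $\lambda$ with $0\le\lambda\le\mu$ is zero; every finitely additive measure decomposes uniquely as a sum of a countably additive and a purely finitely additive measure. For positive $\mu,\nu\in ba(X,\Sigma)$, $(\mu\wedge\nu)(E)=\inf\{\mu(C)+\nu(E\setminus C): C\subset E, C\in\Sigma\}$, and $\mu,\nu$ are called disjoint if $\mu\wedge\nu=0$. A transition function is a map $p(x,E)$ with $0\le p(x,E)\le1$, $p(x,X)=1$, $p(\cdot,E)$ bounded $\Sigma$-measurable for every $E$, and $p(x,\cdot)$ countably additive for every $x$. The Markov operator is $A\mu(E)=\int_X p(x,E)\,\mu(dx)$. A cycle of measures of $A$ is a finite numbered set $\{\mu_1,\dots,\mu_m\}$ of pairwise different positive finitely additive measures with $A\mu_i=\mu_{i+1}$ ($1\le i\le m-1$), $A\mu_m=\mu_1$; its mean measure is $\frac1m\sum_k\mu_k$. The sum of two cycles of the same period is obtained by coordinatewise addition. *)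

theory Defs
  imports "HOL-Analysis.Analysis"
begin

text \<open>Finitely additive real-valued set functions on the sigma-algebra sets M.
  Measures are represented as functions 'a set => real; only their values on
  sets M matter.\<close>

definition pos_fa :: "'a measure \<Rightarrow> ('a set \<Rightarrow> real) \<Rightarrow> bool" where
  "pos_fa M \<mu> \<longleftrightarrow> \<mu> {} = 0 \<and> (\<forall>E\<in>sets M. 0 \<le> \<mu> E) \<and>
     (\<forall>A\<in>sets M. \<forall>B\<in>sets M. A \<inter> B = {} \<longrightarrow> \<mu> (A \<union> B) = \<mu> A + \<mu> B)"

definition count_add :: "'a measure \<Rightarrow> ('a set \<Rightarrow> real) \<Rightarrow> bool" where
  "count_add M \<mu> \<longleftrightarrow> (\<forall>F::nat \<Rightarrow> 'a set. range F \<subseteq> sets M \<longrightarrow> disjoint_family F \<longrightarrow>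
      (\<lambda>n. \<mu> (F n)) sums \<mu> (\<Union>n. F n))"

definition pos_ca :: "'a measure \<Rightarrow> ('a set \<Rightarrow> real) \<Rightarrow> bool" where
  "pos_ca M \<mu> \<longleftrightarrow> pos_fa M \<mu> \<and> count_add M \<mu>"

definition pos_pfa :: "'a measure \<Rightarrow> ('a set \<Rightarrow> real) \<Rightarrow> bool" where
  "pos_pfa M \<mu> \<longleftrightarrow> pos_fa M \<mu> \<and>
     (\<forall>\<nu>. pos_ca M \<nu> \<and> (\<forall>E\<in>sets M. \<nu> E \<le> \<mu> E) \<longrightarrow> (\<forall>E\<in>sets M. \<nu> E = 0))"

definition fa_meet :: "'a measure \<Rightarrow> ('a set \<Rightarrow> real) \<Rightarrow> ('a set \<Rightarrow> real) \<Rightarrow> 'a set \<Rightarrow> real" where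
  "fa_meet M \<mu> \<nu> E = Inf {\<mu> C + \<nu> (E - C) | C. C \<in> sets M \<and> C \<subseteq> E}"

definition fa_disjoint :: "'a measure \<Rightarrow> ('a set \<Rightarrow> real) \<Rightarrow> ('a set \<Rightarrow> real) \<Rightarrow> bool" where
  "fa_disjoint M \<mu> \<nu> \<longleftrightarrow> (\<forall>E\<in>sets M. fa_meet M \<mu> \<nu> E = 0)"

text \<open>Integral of a bounded measurable function against a positive finitely
  additive measure (lower Darboux sums over finite measurable partitions of the
  space; for bounded measurable f this is the usual integral).\<close>
definition meas_partition :: "'a measure \<Rightarrow> 'a set set \<Rightarrow> bool" where
  "meas_partition M P \<longleftrightarrow> finite P \<and> P \<subseteq> sets M \<and> {} \<notin> P \<and> disjoint P \<and> \<Union>P = space M"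

definition fa_integral :: "'a measure \<Rightarrow> ('a set \<Rightarrow> real) \<Rightarrow> ('a \<Rightarrow> real) \<Rightarrow> real" where
  "fa_integral M \<mu> f = Sup {(\<Sum>B\<in>P. (INF x\<in>B. f x) * \<mu> B) | P. meas_partition M P}"

definition transition_function :: "'a measure \<Rightarrow> ('a \<Rightarrow> 'a set \<Rightarrow> real) \<Rightarrow> bool" where
  "transition_function M p \<longleftrightarrow>
     (\<forall>x\<in>space M. \<forall>E\<in>sets M. 0 \<le> p x E \<and> p x E \<le> 1) \<and>
     (\<forall>x\<in>space M. p x (space M) = 1) \<and>
     (\<forall>E\<in>sets M. (\<lambda>x. p x E) \<in> borel_measurable M) \<and>
     (\<forall>x\<in>space M. pos_ca M (p x))"

definition markov_op :: "'a measure \<Rightarrow> ('a \<Rightarrow> 'a set \<Rightarrow> real) \<Rightarrow> ('a set \<Rightarrow> real) \<Rightarrow> 'a set \<Rightarrow> real" where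
  "markov_op M p \<mu> E = fa_integral M \<mu> (\<lambda>x. p x E)"

definition mean_measure :: "nat \<Rightarrow> (nat \<Rightarrow> 'a set \<Rightarrow> real) \<Rightarrow> 'a set \<Rightarrow> real" where
  "mean_measure m \<mu> E = (\<Sum>k<m. \<mu> k E) / real m"

definition cyclic_rel :: "'a measure \<Rightarrow> ('a \<Rightarrow> 'a set \<Rightarrow> real) \<Rightarrow> nat \<Rightarrow> (nat \<Rightarrow> 'a set \<Rightarrow> real) \<Rightarrow> bool" where
  "cyclic_rel M p m \<mu> \<longleftrightarrow> (\<forall>i<m. \<forall>E\<in>sets M. markov_op M p (\<mu> i) E = \<mu> (Suc i mod m) E)"

definition fa_cycle :: "'a measure \<Rightarrow> ('a \<Rightarrow> 'a set \<Rightarrow> real) \<Rightarrow> nat \<Rightarrow> (nat \<Rightarrow> 'a set \<Rightarrow> real) \<Rightarrow> bool" where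
  "fa_cycle M p m \<mu> \<longleftrightarrow> 1 \<le> m \<and> (\<forall>i<m. pos_fa M (\<mu> i)) \<and>
     (\<forall>i<m. \<forall>j<m. i \<noteq> j \<longrightarrow> (\<exists>E\<in>sets M. \<mu> i E \<noteq> \<mu> j E)) \<and> cyclic_rel M p m \<mu>"

end

theory Submission
  imports Defs
begin

(* The countably additive parts are forced to cycle by a mass argument. For a countably
   additive mu, A mu(E) is a Lebesgue integral of p(., E), so A mu is again countably additive
   (dominated convergence), and A is additive in the measure (common refinements of partitions).
   Thus A mu_i^ca is a countably additive measure below A mu_i = mu_(i+1)^ca + mu_(i+1)^pfa, hence
   below mu_(i+1)^ca, because a countably additive measure is disjoint from every purely finitely
   additive one. Since A preserves total mass, summing over the cycle leaves no room for a strict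
   inequality, so A mu_i^ca = mu_(i+1)^ca, and subtracting gives A mu_i^pfa = mu_(i+1)^pfa.
   Sums and nonnegative multiples of countably additive (purely finitely additive) measures stay
   so, which handles the mean measures, and disjointness passes to smaller measures. *)

lemma pos_fa_empty: "pos_fa M \<nu> \<Longrightarrow> \<nu> {} = 0"
  unfolding pos_fa_def by blast

lemma pos_fa_nonneg: "pos_fa M \<nu> \<Longrightarrow> A \<in> sets M \<Longrightarrow> 0 \<le> \<nu> A"
  unfolding pos_fa_def by blast

lemma pos_fa_Un:
  "pos_fa M \<nu> \<Longrightarrow> A \<in> sets M \<Longrightarrow> B \<in> sets M \<Longrightarrow> A \<inter> B = {} \<Longrightarrow> \<nu> (A \<union> B) = \<nu> A + \<nu> B"
  unfolding pos_fa_def by blast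

lemma pos_fa_Diff:
  assumes "pos_fa M \<nu>" "A \<in> sets M" "B \<in> sets M" "A \<subseteq> B"
  shows "\<nu> (B - A) = \<nu> B - \<nu> A"
proof -
  have "\<nu> (A \<union> (B - A)) = \<nu> A + \<nu> (B - A)"
    using assms by (intro pos_fa_Un) auto
  moreover have "A \<union> (B - A) = B" using assms(4) by blast
  ultimately show ?thesis by simp
qed

lemma pos_fa_mono:
  assumes "pos_fa M \<nu>" "A \<in> sets M" "B \<in> sets M" "A \<subseteq> B"
  shows "\<nu> A \<le> \<nu> B"
proof -
  have "0 \<le> \<nu> (B - A)"
    using assms by (intro pos_fa_nonneg) auto
  then show ?thesis using pos_fa_Diff[OF assms] by simp
qed

lemma pos_fa_compl:
  assumes "pos_fa M \<nu>" "E \<in> sets M"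
  shows "\<nu> E + \<nu> (space M - E) = \<nu> (space M)"
  using pos_fa_Diff[OF assms(1,2) sets.top] sets.sets_into_space[OF assms(2)] by simp

lemma pos_fa_finite_UN:
  assumes "pos_fa M \<nu>" "finite I" "\<And>i. i \<in> I \<Longrightarrow> F i \<in> sets M" "disjoint_family_on F I"
  shows "\<nu> (\<Union>i\<in>I. F i) = (\<Sum>i\<in>I. \<nu> (F i))"
  using assms(2-4)
proof (induction I rule: finite_induct)
  case empty
  then show ?case using pos_fa_empty[OF assms(1)] by simp
next
  case (insert j I)
  have "F j \<inter> F i = {}" if "i \<in> I" for i
    using insert.prems(2) insert.hyps(2) that unfolding disjoint_family_on_def by (metis insertCI)
  then have "F j \<inter> (\<Union>i\<in>I. F i) = {}" by blast
  then have "\<nu> (F j \<union> (\<Union>i\<in>I. F i)) = \<nu> (F j) + \<nu> (\<Union>i\<in>I. F i)"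
    using insert.prems(1) insert.hyps(1) by (intro pos_fa_Un[OF assms(1)]) auto
  moreover have "disjoint_family_on F I"
    using insert.prems(2) disjoint_family_on_mono by blast
  ultimately show ?case using insert by simp
qed

lemma pos_fa_partial_sum:
  fixes F :: "nat \<Rightarrow> 'a set"
  assumes "pos_fa M \<nu>" "range F \<subseteq> sets M" "disjoint_family F"
  shows "(\<Sum>n<N. \<nu> (F n)) = \<nu> (\<Union>n<N. F n)"
proof (rule pos_fa_finite_UN[OF assms(1), symmetric])
  show "disjoint_family_on F {..<N}"
    using assms(3) disjoint_family_on_mono[of "{..<N}" UNIV] by simp
qed (use assms(2) in auto)

lemma pos_fa_add: "pos_fa M \<nu>1 \<Longrightarrow> pos_fa M \<nu>2 \<Longrightarrow> pos_fa M (\<lambda>E. \<nu>1 E + \<nu>2 E)"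
  unfolding pos_fa_def by simp

lemma pos_fa_sum:
  assumes "\<And>k. k \<in> I \<Longrightarrow> pos_fa M (\<rho> k)"
  shows "pos_fa M (\<lambda>E. \<Sum>k\<in>I. \<rho> k E)"
  unfolding pos_fa_def
proof (intro conjI ballI impI)
  show "(\<Sum>k\<in>I. \<rho> k {}) = 0"
    using assms pos_fa_empty by (intro sum.neutral) blast
  show "0 \<le> (\<Sum>k\<in>I. \<rho> k E)" if "E \<in> sets M" for E
    using assms pos_fa_nonneg that by (intro sum_nonneg) blast
  fix A B assume "A \<in> sets M" "B \<in> sets M" "A \<inter> B = {}"
  then show "(\<Sum>k\<in>I. \<rho> k (A \<union> B)) = (\<Sum>k\<in>I. \<rho> k A) + (\<Sum>k\<in>I. \<rho> k B)"
    unfolding sum.distrib[symmetric] by (auto intro!: sum.cong pos_fa_Un assms)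
qed

lemma pos_fa_cmult: "pos_fa M \<rho> \<Longrightarrow> 0 \<le> c \<Longrightarrow> pos_fa M (\<lambda>E. c * \<rho> E)"
  unfolding pos_fa_def by (simp add: distrib_left)

lemma pos_ca_imp_pos_fa: "pos_ca M \<nu> \<Longrightarrow> pos_fa M \<nu>"
  unfolding pos_ca_def by simp

lemma pos_pfa_imp_pos_fa: "pos_pfa M \<nu> \<Longrightarrow> pos_fa M \<nu>"
  unfolding pos_pfa_def by simp

lemma pos_ca_sums:
  "pos_ca M \<nu> \<Longrightarrow> range F \<subseteq> sets M \<Longrightarrow> disjoint_family F \<Longrightarrow> (\<lambda>n. \<nu> (F n)) sums \<nu> (\<Union>n. F n)"
  unfolding pos_ca_def count_add_def by simp

lemma pos_ca_sum:
  assumes "\<And>k. k \<in> I \<Longrightarrow> pos_ca M (\<rho> k)"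
  shows "pos_ca M (\<lambda>E. \<Sum>k\<in>I. \<rho> k E)"
  unfolding pos_ca_def count_add_def
proof (intro conjI allI impI)
  show "pos_fa M (\<lambda>E. \<Sum>k\<in>I. \<rho> k E)"
    using assms by (intro pos_fa_sum pos_ca_imp_pos_fa)
  fix F :: "nat \<Rightarrow> _" assume "range F \<subseteq> sets M" "disjoint_family F"
  then show "(\<lambda>n. \<Sum>k\<in>I. \<rho> k (F n)) sums (\<Sum>k\<in>I. \<rho> k (\<Union>n. F n))"
    using assms by (intro sums_sum pos_ca_sums)
qed

lemma pos_ca_cmult:
  assumes "pos_ca M \<rho>" "0 \<le> c"
  shows "pos_ca M (\<lambda>E. c * \<rho> E)"
  unfolding pos_ca_def count_add_def
proof (intro conjI allI impI)
  show "pos_fa M (\<lambda>E. c * \<rho> E)"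
    using assms by (intro pos_fa_cmult pos_ca_imp_pos_fa)
  fix F :: "nat \<Rightarrow> _" assume "range F \<subseteq> sets M" "disjoint_family F"
  then show "(\<lambda>n. c * \<rho> (F n)) sums (c * \<rho> (\<Union>n. F n))"
    using assms by (intro sums_mult pos_ca_sums)
qed

lemma pos_pfa_vanishes:
  assumes "pos_pfa M \<rho>" "pos_ca M \<kappa>" "\<And>E. E \<in> sets M \<Longrightarrow> \<kappa> E \<le> \<rho> E" "E \<in> sets M"
  shows "\<kappa> E = 0"
  using assms unfolding pos_pfa_def by (auto dest!: spec[of _ \<kappa>])

lemma pos_ca_if_dominated:
  assumes \<kappa>: "pos_fa M \<kappa>" and \<nu>: "pos_ca M \<nu>" and le: "\<And>E. E \<in> sets M \<Longrightarrow> \<kappa> E \<le> \<nu> E"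
  shows "pos_ca M \<kappa>"
  unfolding pos_ca_def count_add_def
proof (intro conjI \<kappa> allI impI)
  fix F :: "nat \<Rightarrow> _" assume F: "range F \<subseteq> sets M" "disjoint_family F"
  let ?U = "\<Union>n. F n"
  have U: "?U \<in> sets M" using F by auto
  have fa: "pos_fa M \<nu>" using \<nu> by (rule pos_ca_imp_pos_fa)
  \<comment> \<open>the tail of the series for \<kappa> is dominated by the tail for \<nu>, which tends to 0\<close>
  have bounds: "\<kappa> ?U - (\<nu> ?U - (\<Sum>n<N. \<nu> (F n))) \<le> (\<Sum>n<N. \<kappa> (F n))"
    "(\<Sum>n<N. \<kappa> (F n)) \<le> \<kappa> ?U" for N
  proof -
    let ?V = "\<Union>n<N. F n"
    have V: "?V \<in> sets M" "?V \<subseteq> ?U" using F by auto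
    have UV: "?U - ?V \<in> sets M" using U V(1) by blast
    have "\<kappa> (?U - ?V) \<le> \<nu> (?U - ?V)" "0 \<le> \<kappa> (?U - ?V)"
      using le[OF UV] pos_fa_nonneg[OF \<kappa> UV] .
    then show "\<kappa> ?U - (\<nu> ?U - (\<Sum>n<N. \<nu> (F n))) \<le> (\<Sum>n<N. \<kappa> (F n))"
      "(\<Sum>n<N. \<kappa> (F n)) \<le> \<kappa> ?U"
      unfolding pos_fa_partial_sum[OF \<kappa> F] pos_fa_partial_sum[OF fa F]
      using pos_fa_Diff[OF \<kappa> V(1) U V(2)] pos_fa_Diff[OF fa V(1) U V(2)] by linarith+
  qed
  have "(\<lambda>N. \<Sum>n<N. \<nu> (F n)) \<longlonglongrightarrow> \<nu> ?U"
    using pos_ca_sums[OF \<nu> F] unfolding sums_def .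
  then have "(\<lambda>N. \<kappa> ?U - (\<nu> ?U - (\<Sum>n<N. \<nu> (F n)))) \<longlonglongrightarrow> \<kappa> ?U - (\<nu> ?U - \<nu> ?U)"
    by (intro tendsto_intros)
  then have lim: "(\<lambda>N. \<kappa> ?U - (\<nu> ?U - (\<Sum>n<N. \<nu> (F n)))) \<longlonglongrightarrow> \<kappa> ?U"
    by simp
  have "\<forall>\<^sub>F N in sequentially. \<kappa> ?U - (\<nu> ?U - (\<Sum>n<N. \<nu> (F n))) \<le> (\<Sum>n<N. \<kappa> (F n))"
    "\<forall>\<^sub>F N in sequentially. (\<Sum>n<N. \<kappa> (F n)) \<le> \<kappa> ?U"
    by (rule always_eventually, use bounds in blast)+
  from tendsto_sandwich[OF this lim tendsto_const] show "(\<lambda>n. \<kappa> (F n)) sums \<kappa> ?U"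
    unfolding sums_def .
qed

lemma fa_meet_eq_INF: "fa_meet M \<mu> \<nu> E = (INF C\<in>{C\<in>sets M. C \<subseteq> E}. \<mu> C + \<nu> (E - C))"
  unfolding fa_meet_def by (rule arg_cong[where f=Inf]) auto

lemma fa_meet_le:
  assumes "pos_fa M \<mu>" "pos_fa M \<nu>" "E \<in> sets M" "C \<in> sets M" "C \<subseteq> E"
  shows "fa_meet M \<mu> \<nu> E \<le> \<mu> C + \<nu> (E - C)"
  unfolding fa_meet_eq_INF
proof (rule cINF_lower)
  show "bdd_below ((\<lambda>C. \<mu> C + \<nu> (E - C)) ` {C \<in> sets M. C \<subseteq> E})"
    using assms(3)
    by (auto intro!: bdd_belowI[where m=0] add_nonneg_nonneg pos_fa_nonneg[OF assms(1)] pos_fa_nonneg[OF assms(2)])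
qed (use assms(4,5) in auto)

lemma fa_meet_greatest:
  "(\<And>C. C \<in> sets M \<Longrightarrow> C \<subseteq> E \<Longrightarrow> c \<le> \<mu> C + \<nu> (E - C)) \<Longrightarrow> c \<le> fa_meet M \<mu> \<nu> E"
  unfolding fa_meet_eq_INF by (rule cINF_greatest) auto

lemma fa_meet_nonneg:
  assumes "pos_fa M \<mu>" "pos_fa M \<nu>" "E \<in> sets M"
  shows "0 \<le> fa_meet M \<mu> \<nu> E"
  using assms(3)
  by (auto intro!: fa_meet_greatest add_nonneg_nonneg pos_fa_nonneg[OF assms(1)] pos_fa_nonneg[OF assms(2)])

lemma fa_meet_le_left: "pos_fa M \<mu> \<Longrightarrow> pos_fa M \<nu> \<Longrightarrow> E \<in> sets M \<Longrightarrow> fa_meet M \<mu> \<nu> E \<le> \<mu> E"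
  using fa_meet_le[of M \<mu> \<nu> E E] pos_fa_empty[of M \<nu>] by simp

lemma fa_meet_le_right: "pos_fa M \<mu> \<Longrightarrow> pos_fa M \<nu> \<Longrightarrow> E \<in> sets M \<Longrightarrow> fa_meet M \<mu> \<nu> E \<le> \<nu> E"
  using fa_meet_le[of M \<mu> \<nu> E "{}"] pos_fa_empty[of M \<mu>] by simp

lemma fa_meet_mono:
  assumes "pos_fa M \<mu>" "pos_fa M \<nu>" "E \<in> sets M"
    and "\<And>E. E \<in> sets M \<Longrightarrow> \<mu> E \<le> \<mu>' E" "\<And>E. E \<in> sets M \<Longrightarrow> \<nu> E \<le> \<nu>' E"
  shows "fa_meet M \<mu> \<nu> E \<le> fa_meet M \<mu>' \<nu>' E"
proof (rule fa_meet_greatest)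
  fix C assume C: "C \<in> sets M" "C \<subseteq> E"
  have "fa_meet M \<mu> \<nu> E \<le> \<mu> C + \<nu> (E - C)" by (rule fa_meet_le[OF assms(1-3) C])
  also have "\<dots> \<le> \<mu>' C + \<nu>' (E - C)" using assms(3-5) C by (intro add_mono) auto
  finally show "fa_meet M \<mu> \<nu> E \<le> \<mu>' C + \<nu>' (E - C)" .
qed

lemma fa_meet_Un_le:
  assumes \<mu>: "pos_fa M \<mu>" and \<nu>: "pos_fa M \<nu>"
    and A: "A \<in> sets M" and B: "B \<in> sets M" and AB: "A \<inter> B = {}"
  shows "fa_meet M \<mu> \<nu> (A \<union> B) \<le> fa_meet M \<mu> \<nu> A + fa_meet M \<mu> \<nu> B"
proof -
  have split: "fa_meet M \<mu> \<nu> (A \<union> B) \<le> (\<mu> C1 + \<nu> (A - C1)) + (\<mu> C2 + \<nu> (B - C2))"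
    if C1: "C1 \<in> sets M" "C1 \<subseteq> A" and C2: "C2 \<in> sets M" "C2 \<subseteq> B" for C1 C2
  proof -
    have "fa_meet M \<mu> \<nu> (A \<union> B) \<le> \<mu> (C1 \<union> C2) + \<nu> (A \<union> B - (C1 \<union> C2))"
      using A B C1 C2 by (intro fa_meet_le[OF \<mu> \<nu>]) auto
    moreover have "\<mu> (C1 \<union> C2) = \<mu> C1 + \<mu> C2"
      using C1 C2 AB by (intro pos_fa_Un[OF \<mu>]) auto
    moreover have "A \<union> B - (C1 \<union> C2) = (A - C1) \<union> (B - C2)" using C1 C2 AB by auto
    moreover have "\<nu> ((A - C1) \<union> (B - C2)) = \<nu> (A - C1) + \<nu> (B - C2)"
      using A B C1 C2 AB by (intro pos_fa_Un[OF \<nu>]) auto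
    ultimately show ?thesis by simp
  qed
  have "fa_meet M \<mu> \<nu> (A \<union> B) - fa_meet M \<mu> \<nu> A \<le> fa_meet M \<mu> \<nu> B"
  proof (rule fa_meet_greatest)
    fix C2 assume C2: "C2 \<in> sets M" "C2 \<subseteq> B"
    have "fa_meet M \<mu> \<nu> (A \<union> B) - (\<mu> C2 + \<nu> (B - C2)) \<le> fa_meet M \<mu> \<nu> A"
      using split[OF _ _ C2] by (intro fa_meet_greatest) (simp add: algebra_simps)
    then show "fa_meet M \<mu> \<nu> (A \<union> B) - fa_meet M \<mu> \<nu> A \<le> \<mu> C2 + \<nu> (B - C2)" by linarith
  qed
  then show ?thesis by simp
qed

lemma fa_meet_add_le_Un:
  assumes \<mu>: "pos_fa M \<mu>" and \<nu>: "pos_fa M \<nu>"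
    and A: "A \<in> sets M" and B: "B \<in> sets M" and AB: "A \<inter> B = {}"
  shows "fa_meet M \<mu> \<nu> A + fa_meet M \<mu> \<nu> B \<le> fa_meet M \<mu> \<nu> (A \<union> B)"
proof (rule fa_meet_greatest)
  fix C assume C: "C \<in> sets M" "C \<subseteq> A \<union> B"
  have "fa_meet M \<mu> \<nu> A \<le> \<mu> (C \<inter> A) + \<nu> (A - C \<inter> A)"
    using C A by (intro fa_meet_le[OF \<mu> \<nu>]) auto
  moreover have "fa_meet M \<mu> \<nu> B \<le> \<mu> (C \<inter> B) + \<nu> (B - C \<inter> B)"
    using C B by (intro fa_meet_le[OF \<mu> \<nu>]) auto
  moreover have "\<mu> ((C \<inter> A) \<union> (C \<inter> B)) = \<mu> (C \<inter> A) + \<mu> (C \<inter> B)"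
    using C A B AB by (intro pos_fa_Un[OF \<mu>]) auto
  moreover have "\<nu> ((A - C \<inter> A) \<union> (B - C \<inter> B)) = \<nu> (A - C \<inter> A) + \<nu> (B - C \<inter> B)"
    using C A B AB by (intro pos_fa_Un[OF \<nu>]) auto
  moreover have "(C \<inter> A) \<union> (C \<inter> B) = C" "(A - C \<inter> A) \<union> (B - C \<inter> B) = A \<union> B - C"
    using C by auto
  ultimately show "fa_meet M \<mu> \<nu> A + fa_meet M \<mu> \<nu> B \<le> \<mu> C + \<nu> (A \<union> B - C)"
    by simp
qed

lemma pos_fa_fa_meet:
  assumes "pos_fa M \<mu>" "pos_fa M \<nu>"
  shows "pos_fa M (fa_meet M \<mu> \<nu>)"
  unfolding pos_fa_def
proof (intro conjI ballI impI)
  show "fa_meet M \<mu> \<nu> {} = 0"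
    using fa_meet_le_left[OF assms, of "{}"] fa_meet_nonneg[OF assms, of "{}"] pos_fa_empty[OF assms(1)]
    by simp
  show "0 \<le> fa_meet M \<mu> \<nu> E" if "E \<in> sets M" for E
    using fa_meet_nonneg[OF assms that] .
  show "fa_meet M \<mu> \<nu> (A \<union> B) = fa_meet M \<mu> \<nu> A + fa_meet M \<mu> \<nu> B"
    if "A \<in> sets M" "B \<in> sets M" "A \<inter> B = {}" for A B
    using fa_meet_Un_le[OF assms that] fa_meet_add_le_Un[OF assms that] by linarith
qed

lemma fa_meet_ca_pfa_eq_0:
  assumes ca: "pos_ca M \<kappa>" and pfa: "pos_pfa M \<rho>" and E: "E \<in> sets M"
  shows "fa_meet M \<kappa> \<rho> E = 0"
proof -
  have fa: "pos_fa M \<kappa>" "pos_fa M \<rho>"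
    using ca pfa by (auto intro: pos_ca_imp_pos_fa pos_pfa_imp_pos_fa)
  have "pos_ca M (fa_meet M \<kappa> \<rho>)"
    using fa_meet_le_left[OF fa] by (intro pos_ca_if_dominated[OF pos_fa_fa_meet[OF fa] ca])
  then show ?thesis
    using fa_meet_le_right[OF fa] by (intro pos_pfa_vanishes[OF pfa _ _ E])
qed

lemma fa_disjoint_ca_pfa: "pos_ca M \<kappa> \<Longrightarrow> pos_pfa M \<rho> \<Longrightarrow> fa_disjoint M \<kappa> \<rho>"
  unfolding fa_disjoint_def by (blast intro: fa_meet_ca_pfa_eq_0)

lemma fa_disjoint_mono:
  assumes "fa_disjoint M \<mu>' \<nu>'" "pos_fa M \<mu>" "pos_fa M \<nu>"
    and "\<And>E. E \<in> sets M \<Longrightarrow> \<mu> E \<le> \<mu>' E" "\<And>E. E \<in> sets M \<Longrightarrow> \<nu> E \<le> \<nu>' E"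
  shows "fa_disjoint M \<mu> \<nu>"
  unfolding fa_disjoint_def
proof
  fix E assume E: "E \<in> sets M"
  have "fa_meet M \<mu> \<nu> E \<le> fa_meet M \<mu>' \<nu>' E"
    using fa_meet_mono[OF assms(2,3) E assms(4,5)] .
  then show "fa_meet M \<mu> \<nu> E = 0"
    using assms(1) E fa_meet_nonneg[OF assms(2,3) E] unfolding fa_disjoint_def by force
qed

\<comment> \<open>As the meet of \<kappa> and \<rho>1 vanishes, E splits into C and E - C with \<kappa> C + \<rho>1 (E - C)
  arbitrarily small.\<close>
lemma pos_ca_le_drop_pfa:
  assumes ca: "pos_ca M \<kappa>" and pfa: "pos_pfa M \<rho>1" and fa: "pos_fa M \<rho>2"
    and le: "\<And>E. E \<in> sets M \<Longrightarrow> \<kappa> E \<le> \<rho>1 E + \<rho>2 E" and E: "E \<in> sets M"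
  shows "\<kappa> E \<le> \<rho>2 E"
proof (rule field_le_epsilon)
  fix e :: real assume "0 < e"
  then obtain C where C: "C \<in> sets M" "C \<subseteq> E" and small: "\<kappa> C + \<rho>1 (E - C) < e"
    using fa_meet_greatest[of M E e \<kappa> \<rho>1] fa_meet_ca_pfa_eq_0[OF ca pfa E] by force
  have EC: "E - C \<in> sets M" using C E by blast
  have "\<kappa> E = \<kappa> C + \<kappa> (E - C)"
    using pos_fa_Diff[OF pos_ca_imp_pos_fa[OF ca] C(1) E C(2)] by simp
  moreover have "\<rho>2 (E - C) \<le> \<rho>2 E"
    using EC E by (intro pos_fa_mono[OF fa]) auto
  ultimately show "\<kappa> E \<le> \<rho>2 E + e"
    using le[OF EC] small by linarith
qed

lemma pos_pfa_add:
  assumes "pos_pfa M \<rho>1" "pos_pfa M \<rho>2"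
  shows "pos_pfa M (\<lambda>E. \<rho>1 E + \<rho>2 E)"
proof -
  have fa: "pos_fa M \<rho>1" "pos_fa M \<rho>2"
    using assms by (auto intro: pos_pfa_imp_pos_fa)
  have "\<kappa> E = 0" if "pos_ca M \<kappa>" "\<forall>E\<in>sets M. \<kappa> E \<le> \<rho>1 E + \<rho>2 E" "E \<in> sets M" for \<kappa> E
    using that pos_ca_le_drop_pfa[OF that(1) assms(1) fa(2)]
    by (intro pos_pfa_vanishes[OF assms(2) that(1)]) auto
  then show ?thesis
    unfolding pos_pfa_def using pos_fa_add[OF fa] by blast
qed

lemma pos_pfa_sum:
  assumes "finite I" "\<And>k. k \<in> I \<Longrightarrow> pos_pfa M (\<rho> k)"
  shows "pos_pfa M (\<lambda>E. \<Sum>k\<in>I. \<rho> k E)"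
  using assms
proof (induction I rule: finite_induct)
  case empty
  then show ?case
    unfolding pos_pfa_def pos_fa_def by (auto intro: antisym pos_fa_nonneg pos_ca_imp_pos_fa)
next
  case (insert i I)
  then show ?case by (simp add: pos_pfa_add)
qed

lemma pos_pfa_cmult:
  assumes pfa: "pos_pfa M \<rho>" and c: "0 \<le> c"
  shows "pos_pfa M (\<lambda>E. c * \<rho> E)"
  unfolding pos_pfa_def
proof (intro conjI allI impI ballI)
  show "pos_fa M (\<lambda>E. c * \<rho> E)"
    using pfa c by (intro pos_fa_cmult pos_pfa_imp_pos_fa)
  fix \<kappa> E assume \<kappa>: "pos_ca M \<kappa> \<and> (\<forall>E\<in>sets M. \<kappa> E \<le> c * \<rho> E)" and E: "E \<in> sets M"
  show "\<kappa> E = 0"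
  proof (cases "c = 0")
    case True
    then show ?thesis
      using \<kappa> E pos_fa_nonneg[OF pos_ca_imp_pos_fa, of M \<kappa> E] by (simp add: antisym)
  next
    case False
    have "pos_ca M (\<lambda>E. inverse c * \<kappa> E)"
      using \<kappa> c by (intro pos_ca_cmult) auto
    moreover have "inverse c * \<kappa> E' \<le> \<rho> E'" if "E' \<in> sets M" for E'
      using \<kappa> that c False by (auto simp: inverse_eq_divide divide_le_eq mult.commute)
    ultimately have "inverse c * \<kappa> E = 0"
      by (rule pos_pfa_vanishes[OF pfa _ _ E])
    then show ?thesis using False by simp
  qed
qed

lemma ca_pfa_decomposition_unique:
  assumes "pos_ca M \<kappa>" "pos_pfa M \<rho>" "pos_ca M \<kappa>'" "pos_pfa M \<rho>'"
    and eq: "\<And>E. E \<in> sets M \<Longrightarrow> \<kappa> E + \<rho> E = \<kappa>' E + \<rho>' E" and E: "E \<in> sets M"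
  shows "\<kappa> E = \<kappa>' E" "\<rho> E = \<rho>' E"
proof -
  have "\<kappa> E \<le> \<kappa>' E"
    using eq pos_fa_nonneg[OF pos_pfa_imp_pos_fa[OF assms(2)]]
    by (intro pos_ca_le_drop_pfa[OF assms(1,4) pos_ca_imp_pos_fa[OF assms(3)] _ E]) force
  moreover have "\<kappa>' E \<le> \<kappa> E"
    using eq pos_fa_nonneg[OF pos_pfa_imp_pos_fa[OF assms(4)]]
    by (intro pos_ca_le_drop_pfa[OF assms(3,2) pos_ca_imp_pos_fa[OF assms(1)] _ E]) force
  ultimately show "\<kappa> E = \<kappa>' E" "\<rho> E = \<rho>' E"
    using eq[OF E] by linarith+
qed

definition lower_sum :: "('a set \<Rightarrow> real) \<Rightarrow> ('a \<Rightarrow> real) \<Rightarrow> 'a set set \<Rightarrow> real" where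
  "lower_sum \<nu> f P = (\<Sum>B\<in>P. (INF x\<in>B. f x) * \<nu> B)"

lemma fa_integral_eq_SUP: "fa_integral M \<nu> f = (SUP P\<in>{P. meas_partition M P}. lower_sum \<nu> f P)"
  unfolding fa_integral_def lower_sum_def by (rule arg_cong[where f=Sup]) auto

lemma meas_partition_memD:
  assumes "meas_partition M P" "B \<in> P"
  shows "B \<in> sets M" "B \<noteq> {}" "B \<subseteq> space M"
  using assms unfolding meas_partition_def by (auto dest: sets.sets_into_space)

lemma meas_partition_disjointD:
  assumes "meas_partition M P" "B \<in> P" "C \<in> P" "B \<noteq> C"
  shows "B \<inter> C = {}"
  using assms unfolding meas_partition_def disjoint_def by auto

lemma meas_partition_space: "space M \<noteq> {} \<Longrightarrow> meas_partition M {space M}"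
  unfolding meas_partition_def by (auto simp: disjoint_def)

lemma pos_fa_meas_partition_sum:
  assumes \<nu>: "pos_fa M \<nu>" and Q: "meas_partition M Q" and B: "B \<in> sets M"
  shows "\<nu> B = (\<Sum>C\<in>Q. \<nu> (B \<inter> C))"
proof -
  have "(\<Union>C\<in>Q. B \<inter> C) = B"
    using Q sets.sets_into_space[OF B] unfolding meas_partition_def by auto
  moreover have "disjoint_family_on (\<lambda>C. B \<inter> C) Q"
    unfolding disjoint_family_on_def using meas_partition_disjointD[OF Q] by blast
  moreover have "\<nu> (\<Union>C\<in>Q. B \<inter> C) = (\<Sum>C\<in>Q. \<nu> (B \<inter> C))"
  proof (rule pos_fa_finite_UN[OF \<nu>])
    show "finite Q" using Q unfolding meas_partition_def by simp
    show "B \<inter> C \<in> sets M" if "C \<in> Q" for C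
      using B meas_partition_memD(1)[OF Q that] by blast
  qed fact
  ultimately show ?thesis by simp
qed

lemma pos_fa_meas_partition_total:
  assumes "pos_fa M \<nu>" "meas_partition M P"
  shows "(\<Sum>B\<in>P. \<nu> B) = \<nu> (space M)"
  using pos_fa_meas_partition_sum[OF assms sets.top] meas_partition_memD(3)[OF assms(2)]
  by (simp add: Int_absorb1)

lemma INF_unit_interval:
  fixes f :: "'a \<Rightarrow> real"
  assumes f01: "\<And>x. x \<in> B \<Longrightarrow> f x \<in> {0..1}" and B: "B \<noteq> {}"
  shows "bdd_below (f ` B)" "(INF x\<in>B. f x) \<in> {0..1}"
proof -
  show bdd: "bdd_below (f ` B)"
    using f01 by (intro bdd_belowI[where m=0]) auto
  obtain x where "x \<in> B" using B by blast
  then have "(INF x\<in>B. f x) \<le> 1" using cINF_lower[OF bdd] f01 by (meson atLeastAtMost_iff order_trans)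
  moreover have "0 \<le> (INF x\<in>B. f x)"
    using f01 by (intro cINF_greatest[OF B]) auto
  ultimately show "(INF x\<in>B. f x) \<in> {0..1}" by simp
qed

lemma lower_sum_le_total:
  assumes \<nu>: "pos_fa M \<nu>" and P: "meas_partition M P" and f01: "\<And>x. x \<in> space M \<Longrightarrow> f x \<in> {0..1}"
  shows "lower_sum \<nu> f P \<le> \<nu> (space M)"
proof -
  have "lower_sum \<nu> f P \<le> (\<Sum>B\<in>P. \<nu> B)"
    unfolding lower_sum_def
  proof (rule sum_mono)
    fix B assume B: "B \<in> P"
    have "(INF x\<in>B. f x) \<le> 1"
      using INF_unit_interval(2)[of B f] f01 meas_partition_memD[OF P B] by auto
    then show "(INF x\<in>B. f x) * \<nu> B \<le> \<nu> B"
      using mult_right_mono[of _ 1, OF _ pos_fa_nonneg[OF \<nu> meas_partition_memD(1)[OF P B]]] by simp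
  qed
  then show ?thesis using pos_fa_meas_partition_total[OF \<nu> P] by simp
qed

lemma fa_integral_upper:
  assumes \<nu>: "pos_fa M \<nu>" and f01: "\<And>x. x \<in> space M \<Longrightarrow> f x \<in> {0..1}" and P: "meas_partition M P"
  shows "lower_sum \<nu> f P \<le> fa_integral M \<nu> f"
  unfolding fa_integral_eq_SUP
proof (rule cSUP_upper)
  show "bdd_above (lower_sum \<nu> f ` {P. meas_partition M P})"
    using lower_sum_le_total[where f=f, OF \<nu> _ f01] by (intro bdd_aboveI[where M="\<nu> (space M)"]) auto
qed (use P in simp)

lemma fa_integral_least:
  assumes "space M \<noteq> {}" and "\<And>P. meas_partition M P \<Longrightarrow> lower_sum \<nu> f P \<le> c"
  shows "fa_integral M \<nu> f \<le> c"
  unfolding fa_integral_eq_SUP using assms meas_partition_space[OF assms(1)] by (intro cSUP_least) auto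

lemma fa_integral_nonneg:
  assumes ne: "space M \<noteq> {}" and \<nu>: "pos_fa M \<nu>" and f01: "\<And>x. x \<in> space M \<Longrightarrow> f x \<in> {0..1}"
  shows "0 \<le> fa_integral M \<nu> f"
proof -
  have "0 \<le> lower_sum \<nu> f {space M}"
    unfolding lower_sum_def using INF_unit_interval(2)[of "space M" f] f01 ne pos_fa_nonneg[OF \<nu> sets.top]
    by simp
  also have "\<dots> \<le> fa_integral M \<nu> f"
    by (rule fa_integral_upper[where f=f, OF \<nu> f01 meas_partition_space[OF ne]])
  finally show ?thesis .
qed

lemma fa_integral_one:
  assumes ne: "space M \<noteq> {}" and \<nu>: "pos_fa M \<nu>" and f1: "\<And>x. x \<in> space M \<Longrightarrow> f x = 1"
  shows "fa_integral M \<nu> f = \<nu> (space M)"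
proof -
  have lower_sum_one: "lower_sum \<nu> f P = \<nu> (space M)" if P: "meas_partition M P" for P
  proof -
    have "(INF x\<in>B. f x) = 1" if "B \<in> P" for B
      using meas_partition_memD(2,3)[OF P that] f1 by (simp add: subset_eq)
    then show ?thesis
      unfolding lower_sum_def using pos_fa_meas_partition_total[OF \<nu> P] by simp
  qed
  show ?thesis
  proof (rule antisym)
    show "fa_integral M \<nu> f \<le> \<nu> (space M)"
      using lower_sum_one by (intro fa_integral_least[OF ne]) simp
    show "\<nu> (space M) \<le> fa_integral M \<nu> f"
      using fa_integral_upper[where f=f, OF \<nu> _ meas_partition_space[OF ne]] f1
        lower_sum_one[OF meas_partition_space[OF ne]]
      by simp
  qed
qed

definition partition_meet :: "'a set set \<Rightarrow> 'a set set \<Rightarrow> 'a set set" where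
  "partition_meet P Q = (\<lambda>(B, C). B \<inter> C) ` (P \<times> Q) - {{}}"

lemma partition_meet_commute: "partition_meet P Q = partition_meet Q P"
  unfolding partition_meet_def by (auto simp: image_iff)

lemma meas_partition_partition_meet:
  assumes P: "meas_partition M P" and Q: "meas_partition M Q"
  shows "meas_partition M (partition_meet P Q)"
  unfolding meas_partition_def partition_meet_def
proof (intro conjI)
  show "finite ((\<lambda>(B, C). B \<inter> C) ` (P \<times> Q) - {{}})"
    using P Q unfolding meas_partition_def by simp
  show "(\<lambda>(B, C). B \<inter> C) ` (P \<times> Q) - {{}} \<subseteq> sets M"
    using meas_partition_memD(1)[OF P] meas_partition_memD(1)[OF Q] by auto
  show "disjoint ((\<lambda>(B, C). B \<inter> C) ` (P \<times> Q) - {{}})"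
  proof (rule disjointI)
    fix D D' assume "D \<in> (\<lambda>(B, C). B \<inter> C) ` (P \<times> Q) - {{}}" "D' \<in> (\<lambda>(B, C). B \<inter> C) ` (P \<times> Q) - {{}}"
      and "D \<noteq> D'"
    then obtain B C B' C' where "D = B \<inter> C" "D' = B' \<inter> C'" "B \<in> P" "B' \<in> P" "C \<in> Q" "C' \<in> Q"
      and "B \<noteq> B' \<or> C \<noteq> C'"
      by auto
    then show "D \<inter> D' = {}"
      using meas_partition_disjointD[OF P, of B B'] meas_partition_disjointD[OF Q, of C C'] by auto
  qed
  show "\<Union> ((\<lambda>(B, C). B \<inter> C) ` (P \<times> Q) - {{}}) = space M"
  proof
    show "\<Union> ((\<lambda>(B, C). B \<inter> C) ` (P \<times> Q) - {{}}) \<subseteq> space M"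
      using meas_partition_memD(3)[OF P] by auto
    show "space M \<subseteq> \<Union> ((\<lambda>(B, C). B \<inter> C) ` (P \<times> Q) - {{}})"
    proof
      fix x assume "x \<in> space M"
      then obtain B C where "B \<in> P" "C \<in> Q" "x \<in> B" "x \<in> C"
        using P Q unfolding meas_partition_def by blast
      then show "x \<in> \<Union> ((\<lambda>(B, C). B \<inter> C) ` (P \<times> Q) - {{}})" by blast
    qed
  qed
qed simp

lemma sum_partition_meet:
  fixes g :: "'a set \<Rightarrow> real"
  assumes P: "meas_partition M P" and Q: "meas_partition M Q" and g: "g {} = 0"
  shows "(\<Sum>D\<in>partition_meet P Q. g D) = (\<Sum>B\<in>P. \<Sum>C\<in>Q. g (B \<inter> C))"
proof -
  let ?h = "\<lambda>(B, C). B \<inter> C"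
  have finite: "finite P" "finite Q" using P Q unfolding meas_partition_def by auto
  \<comment> \<open>distinct pairs of blocks can only meet in the empty set, where g vanishes\<close>
  have "(\<Sum>D\<in>?h ` (P \<times> Q). g D) = (\<Sum>BC\<in>P \<times> Q. g (?h BC))"
  proof (rule sum.reindex_nontrivial[unfolded comp_def])
    fix BC BC' assume "BC \<in> P \<times> Q" "BC' \<in> P \<times> Q" "BC \<noteq> BC'" "?h BC = ?h BC'"
    moreover obtain B C B' C' where "BC = (B, C)" "BC' = (B', C')" by fastforce
    ultimately have "?h BC = {}"
      using meas_partition_disjointD[OF P, of B B'] meas_partition_disjointD[OF Q, of C C'] by auto
    then show "g (?h BC) = 0" using g by simp
  qed (use finite in simp)
  moreover have "finite (?h ` (P \<times> Q))" using finite by simp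
  ultimately show ?thesis
    unfolding partition_meet_def using g
    by (simp add: sum_diff1 sum.cartesian_product case_prod_beta)
qed

lemma lower_sum_le_partition_meet:
  assumes \<nu>: "pos_fa M \<nu>" and P: "meas_partition M P" and Q: "meas_partition M Q"
    and f01: "\<And>x. x \<in> space M \<Longrightarrow> f x \<in> {0..1}"
  shows "lower_sum \<nu> f P \<le> lower_sum \<nu> f (partition_meet P Q)"
proof -
  have "lower_sum \<nu> f P = (\<Sum>B\<in>P. \<Sum>C\<in>Q. (INF x\<in>B. f x) * \<nu> (B \<inter> C))"
    unfolding lower_sum_def
    by (simp add: pos_fa_meas_partition_sum[OF \<nu> Q meas_partition_memD(1)[OF P]] sum_distrib_left)
  also have "\<dots> \<le> (\<Sum>B\<in>P. \<Sum>C\<in>Q. (INF x\<in>B \<inter> C. f x) * \<nu> (B \<inter> C))"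
  proof (intro sum_mono)
    fix B C assume B: "B \<in> P" and C: "C \<in> Q"
    have BC: "B \<inter> C \<in> sets M"
      using meas_partition_memD(1)[OF P B] meas_partition_memD(1)[OF Q C] by blast
    show "(INF x\<in>B. f x) * \<nu> (B \<inter> C) \<le> (INF x\<in>B \<inter> C. f x) * \<nu> (B \<inter> C)"
    proof (cases "B \<inter> C = {}")
      case False
      have "bdd_below (f ` B)"
        using f01 meas_partition_memD(2,3)[OF P B] by (intro INF_unit_interval(1)) auto
      then have "(INF x\<in>B. f x) \<le> (INF x\<in>B \<inter> C. f x)"
        using False by (intro cINF_superset_mono) auto
      then show ?thesis
        using pos_fa_nonneg[OF \<nu> BC] by (rule mult_right_mono)
    qed (simp add: pos_fa_empty[OF \<nu>])
  qed
  also have "\<dots> = lower_sum \<nu> f (partition_meet P Q)"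
    unfolding lower_sum_def using pos_fa_empty[OF \<nu>]
    by (intro sum_partition_meet[OF P Q, symmetric]) simp
  finally show ?thesis .
qed

lemma fa_integral_add_measure:
  assumes ne: "space M \<noteq> {}" and \<nu>1: "pos_fa M \<nu>1" and \<nu>2: "pos_fa M \<nu>2"
    and \<nu>: "\<And>E. E \<in> sets M \<Longrightarrow> \<nu> E = \<nu>1 E + \<nu>2 E"
    and f01: "\<And>x. x \<in> space M \<Longrightarrow> f x \<in> {0..1}"
  shows "fa_integral M \<nu> f = fa_integral M \<nu>1 f + fa_integral M \<nu>2 f"
proof -
  have fa: "pos_fa M \<nu>"
    using pos_fa_add[OF \<nu>1 \<nu>2] \<nu> unfolding pos_fa_def by simp
  have split: "lower_sum \<nu> f P = lower_sum \<nu>1 f P + lower_sum \<nu>2 f P" if P: "meas_partition M P" for P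
    unfolding lower_sum_def sum.distrib[symmetric] using \<nu> meas_partition_memD(1)[OF P]
    by (intro sum.cong) (auto simp: distrib_left)
  show ?thesis
  proof (rule antisym)
    show "fa_integral M \<nu> f \<le> fa_integral M \<nu>1 f + fa_integral M \<nu>2 f"
      using split fa_integral_upper[where f=f, OF \<nu>1 f01] fa_integral_upper[where f=f, OF \<nu>2 f01]
      by (intro fa_integral_least[OF ne]) (simp add: add_mono)
    have "lower_sum \<nu>1 f P + lower_sum \<nu>2 f Q \<le> fa_integral M \<nu> f"
      if P: "meas_partition M P" and Q: "meas_partition M Q" for P Q
    proof -
      have R: "meas_partition M (partition_meet P Q)"
        by (rule meas_partition_partition_meet[OF P Q])
      have "lower_sum \<nu>1 f P + lower_sum \<nu>2 f Q
          \<le> lower_sum \<nu>1 f (partition_meet P Q) + lower_sum \<nu>2 f (partition_meet P Q)"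
        using lower_sum_le_partition_meet[where f=f, OF \<nu>1 P Q f01] lower_sum_le_partition_meet[where f=f, OF \<nu>2 Q P f01]
        by (simp add: partition_meet_commute add_mono)
      also have "\<dots> \<le> fa_integral M \<nu> f"
        using split[OF R] fa_integral_upper[where f=f, OF fa f01 R] by simp
      finally show ?thesis .
    qed
    then have "lower_sum \<nu>2 f Q \<le> fa_integral M \<nu> f - fa_integral M \<nu>1 f"
      if Q: "meas_partition M Q" for Q
      using fa_integral_least[OF ne, of \<nu>1 f "fa_integral M \<nu> f - lower_sum \<nu>2 f Q"] Q by force
    then show "fa_integral M \<nu>1 f + fa_integral M \<nu>2 f \<le> fa_integral M \<nu> f"
      using fa_integral_least[OF ne, of \<nu>2 f] by force
  qed
qed

definition ca_measure :: "'a measure \<Rightarrow> ('a set \<Rightarrow> real) \<Rightarrow> 'a measure" where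
  "ca_measure M \<nu> = measure_of (space M) (sets M) (\<lambda>E. ennreal (\<nu> E))"

lemma sets_ca_measure [simp]: "sets (ca_measure M \<nu>) = sets M"
  unfolding ca_measure_def by (rule sets.sets_measure_of_eq)

lemma space_ca_measure [simp]: "space (ca_measure M \<nu>) = space M"
  unfolding ca_measure_def by (rule sets.space_measure_of_eq)

lemma measurable_ca_measure [simp]: "measurable (ca_measure M \<nu>) N = measurable M N"
  by (rule measurable_cong_sets) simp_all

lemma emeasure_ca_measure:
  assumes \<nu>: "pos_ca M \<nu>" and E: "E \<in> sets M"
  shows "emeasure (ca_measure M \<nu>) E = ennreal (\<nu> E)"
  unfolding ca_measure_def
proof (rule emeasure_measure_of_sigma[OF sets.sigma_algebra_axioms _ _ E])
  have fa: "pos_fa M \<nu>" using \<nu> by (rule pos_ca_imp_pos_fa)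
  show "positive (sets M) (\<lambda>E. ennreal (\<nu> E))"
    unfolding positive_def using pos_fa_empty[OF fa] by simp
  show "countably_additive (sets M) (\<lambda>E. ennreal (\<nu> E))"
    unfolding countably_additive_def
  proof (intro allI impI)
    fix A :: "nat \<Rightarrow> _" assume A: "range A \<subseteq> sets M" "disjoint_family A"
    have sums: "(\<lambda>n. \<nu> (A n)) sums \<nu> (\<Union>n. A n)" by (rule pos_ca_sums[OF \<nu> A])
    then have "(\<Sum>n. ennreal (\<nu> (A n))) = ennreal (\<Sum>n. \<nu> (A n))"
      using A(1) pos_fa_nonneg[OF fa] by (intro suminf_ennreal2) (auto simp: sums_iff)
    then show "(\<Sum>n. ennreal (\<nu> (A n))) = ennreal (\<nu> (\<Union> (range A)))"
      using sums by (simp add: sums_iff)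
  qed
qed

lemma measure_ca_measure:
  assumes "pos_ca M \<nu>" "E \<in> sets M"
  shows "measure (ca_measure M \<nu>) E = \<nu> E"
  unfolding measure_def
  using emeasure_ca_measure[OF assms] pos_fa_nonneg[OF pos_ca_imp_pos_fa[OF assms(1)] assms(2)] by simp

lemma integrable_ca_measure:
  fixes f :: "'a \<Rightarrow> real"
  assumes \<nu>: "pos_ca M \<nu>" and f: "f \<in> borel_measurable M" and bound: "\<And>x. x \<in> space M \<Longrightarrow> \<bar>f x\<bar> \<le> c"
  shows "integrable (ca_measure M \<nu>) f"
proof (rule finite_measure.integrable_const_bound[where B=c])
  show "finite_measure (ca_measure M \<nu>)"
    by (rule finite_measureI) (simp add: emeasure_ca_measure[OF \<nu> sets.top])
qed (use f bound in \<open>auto intro: AE_I2\<close>)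

lemma integrable_ca_measure_indicator:
  assumes \<nu>: "pos_ca M \<nu>" and B: "B \<in> sets M"
  shows "integrable (ca_measure M \<nu>) (indicator B :: 'a \<Rightarrow> real)"
  using B by (intro integrable_real_indicator) (simp_all add: emeasure_ca_measure[OF \<nu>])

lemma meas_partition_step_at:
  assumes P: "meas_partition M P" and B: "B \<in> P" and x: "x \<in> B"
  shows "(\<Sum>B'\<in>P. c B' * indicator B' x) = (c B :: real)"
proof -
  have "x \<notin> B'" if "B' \<in> P - {B}" for B'
    using meas_partition_disjointD[OF P B, of B'] that x by auto
  then have "(\<Sum>B'\<in>P - {B}. c B' * indicator B' x) = 0"
    by (intro sum.neutral) simp
  moreover have "finite P" using P unfolding meas_partition_def by simp
  ultimately show ?thesis
    using sum.remove[of P B "\<lambda>B'. c B' * indicator B' x"] B x by simp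
qed

lemma integrable_meas_partition_step:
  assumes \<nu>: "pos_ca M \<nu>" and P: "meas_partition M P"
  shows "integrable (ca_measure M \<nu>) (\<lambda>x. \<Sum>B\<in>P. c B * indicator B x :: real)"
  using meas_partition_memD(1)[OF P] by (simp add: integrable_ca_measure_indicator[OF \<nu>])

lemma integral_meas_partition_step:
  assumes \<nu>: "pos_ca M \<nu>" and P: "meas_partition M P"
  shows "integral\<^sup>L (ca_measure M \<nu>) (\<lambda>x. \<Sum>B\<in>P. c B * indicator B x) = (\<Sum>B\<in>P. c B * \<nu> B)"
proof -
  have B: "B \<in> sets M" "B \<inter> space M = B" if "B \<in> P" for B
    using meas_partition_memD[OF P that] by auto
  then show ?thesis
    using integrable_ca_measure_indicator[OF \<nu>]
    by (simp add: integral_sum measure_ca_measure[OF \<nu>])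
qed

lemma lower_sum_le_lebesgue_integral:
  fixes f :: "'a \<Rightarrow> real"
  assumes \<nu>: "pos_ca M \<nu>" and P: "meas_partition M P" and f: "f \<in> borel_measurable M"
    and f01: "\<And>x. x \<in> space M \<Longrightarrow> f x \<in> {0..1}"
  shows "lower_sum \<nu> f P \<le> integral\<^sup>L (ca_measure M \<nu>) f"
proof -
  let ?step = "\<lambda>x. \<Sum>B\<in>P. (INF y\<in>B. f y) * indicator B x"
  have "lower_sum \<nu> f P = integral\<^sup>L (ca_measure M \<nu>) ?step"
    unfolding lower_sum_def by (rule integral_meas_partition_step[OF \<nu> P, symmetric])
  also have "\<dots> \<le> integral\<^sup>L (ca_measure M \<nu>) f"
  proof (rule integral_mono)
    show "integrable (ca_measure M \<nu>) ?step"
      by (rule integrable_meas_partition_step[OF \<nu> P])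
    show "integrable (ca_measure M \<nu>) f"
      using f01 by (intro integrable_ca_measure[OF \<nu> f, where c=1]) auto
    fix x assume "x \<in> space (ca_measure M \<nu>)"
    then obtain B where B: "B \<in> P" "x \<in> B"
      using P unfolding meas_partition_def by auto
    have "(INF y\<in>B. f y) \<le> f x"
      using f01 meas_partition_memD(2,3)[OF P B(1)] B(2)
      by (intro cINF_lower INF_unit_interval(1)) auto
    then show "?step x \<le> f x"
      unfolding meas_partition_step_at[OF P B] .
  qed
  finally show ?thesis .
qed

lemma meas_partition_level_sets:
  assumes "finite (g ` space M)" and "\<And>x. x \<in> space M \<Longrightarrow> {y \<in> space M. g y = g x} \<in> sets M"
  shows "meas_partition M ((\<lambda>x. {y \<in> space M. g y = g x}) ` space M)"
  unfolding meas_partition_def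
proof (intro conjI)
  have "(\<lambda>x. {y \<in> space M. g y = g x}) ` space M = (\<lambda>v. {y \<in> space M. g y = v}) ` g ` space M"
    by auto
  then show "finite ((\<lambda>x. {y \<in> space M. g y = g x}) ` space M)"
    using assms(1) by simp
  show "disjoint ((\<lambda>x. {y \<in> space M. g y = g x}) ` space M)"
    by (rule disjointI) auto
qed (use assms(2) in auto)

\<comment> \<open>Partition by the level sets of \<open>\<lfloor>n f\<rfloor>\<close>; there the infimum of f is within 1/n of f.\<close>
lemma meas_partition_lower_step_approx:
  fixes f :: "'a \<Rightarrow> real"
  assumes f: "f \<in> borel_measurable M" and f01: "\<And>x. x \<in> space M \<Longrightarrow> f x \<in> {0..1}" and n: "0 < n"
  obtains P where "meas_partition M P"
    "\<And>x. x \<in> space M \<Longrightarrow> f x \<le> (\<Sum>B\<in>P. (INF y\<in>B. f y) * indicator B x) + 1 / real n"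
proof -
  define g where "g x = \<lfloor>real n * f x\<rfloor>" for x
  define P where "P = (\<lambda>x. {y \<in> space M. g y = g x}) ` space M"
  have "g x \<in> {0..int n}" if x: "x \<in> space M" for x
  proof -
    have "0 \<le> real n * f x" "real n * f x \<le> real n"
      using f01[OF x] by (auto intro: mult_right_le_one_le)
    then show ?thesis
      unfolding g_def using floor_mono[of "real n * f x" "real n"] by simp
  qed
  then have "g ` space M \<subseteq> {0..int n}" by blast
  then have P: "meas_partition M P"
    unfolding P_def g_def using f by (intro meas_partition_level_sets) (auto intro: finite_subset)
  have "f x \<le> (\<Sum>B\<in>P. (INF y\<in>B. f y) * indicator B x) + 1 / real n" if x: "x \<in> space M" for x
  proof -
    let ?B = "{y \<in> space M. g y = g x}"
    have B: "?B \<in> P" "x \<in> ?B" unfolding P_def using x by auto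
    have "real_of_int (g x) / real n \<le> (INF y\<in>?B. f y)"
    proof (rule cINF_greatest)
      fix y assume "y \<in> ?B"
      then have "real_of_int (g x) \<le> real n * f y"
        unfolding g_def by (metis (mono_tags, lifting) mem_Collect_eq of_int_floor_le)
      then show "real_of_int (g x) / real n \<le> f y"
        using n by (simp add: divide_le_eq mult.commute)
    qed (use B in auto)
    moreover have "real n * f x < real_of_int (g x) + 1"
      unfolding g_def by linarith
    then have "f x < real_of_int (g x) / real n + 1 / real n"
      using n by (simp add: field_simps)
    ultimately show ?thesis
      unfolding meas_partition_step_at[OF P B] by linarith
  qed
  with P show ?thesis by (rule that)
qed

lemma lebesgue_integral_le_fa_integral_plus:
  fixes f :: "'a \<Rightarrow> real"
  assumes \<nu>: "pos_ca M \<nu>" and f: "f \<in> borel_measurable M"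
    and f01: "\<And>x. x \<in> space M \<Longrightarrow> f x \<in> {0..1}" and n: "0 < n"
  shows "integral\<^sup>L (ca_measure M \<nu>) f \<le> fa_integral M \<nu> f + \<nu> (space M) / real n"
proof -
  obtain P where P: "meas_partition M P"
    and close: "\<And>x. x \<in> space M \<Longrightarrow> f x \<le> (\<Sum>B\<in>P. (INF y\<in>B. f y) * indicator B x) + 1 / real n"
    using meas_partition_lower_step_approx[where f=f, OF f f01 n] by blast
  let ?step = "\<lambda>x. \<Sum>B\<in>P. (INF y\<in>B. f y) * indicator B x"
  have step_integrable: "integrable (ca_measure M \<nu>) ?step"
    by (rule integrable_meas_partition_step[OF \<nu> P])
  have const_integrable: "integrable (ca_measure M \<nu>) (\<lambda>x. 1 / real n)"
    by (rule integrable_ca_measure[OF \<nu>, where c="1 / real n"]) auto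
  have "integral\<^sup>L (ca_measure M \<nu>) f \<le> integral\<^sup>L (ca_measure M \<nu>) (\<lambda>x. ?step x + 1 / real n)"
    using close f01 step_integrable const_integrable
    by (intro integral_mono integrable_add integrable_ca_measure[OF \<nu> f, where c=1]) auto
  also have "\<dots> = lower_sum \<nu> f P + \<nu> (space M) / real n"
    using step_integrable const_integrable integral_meas_partition_step[OF \<nu> P]
    by (simp add: lower_sum_def measure_ca_measure[OF \<nu> sets.top])
  also have "\<dots> \<le> fa_integral M \<nu> f + \<nu> (space M) / real n"
    using fa_integral_upper[where f=f, OF pos_ca_imp_pos_fa[OF \<nu>] f01 P] by simp
  finally show ?thesis .
qed

lemma fa_integral_eq_lebesgue_integral:
  fixes f :: "'a \<Rightarrow> real"
  assumes ne: "space M \<noteq> {}" and \<nu>: "pos_ca M \<nu>" and f: "f \<in> borel_measurable M"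
    and f01: "\<And>x. x \<in> space M \<Longrightarrow> f x \<in> {0..1}"
  shows "fa_integral M \<nu> f = integral\<^sup>L (ca_measure M \<nu>) f"
proof (rule antisym)
  show "fa_integral M \<nu> f \<le> integral\<^sup>L (ca_measure M \<nu>) f"
    using lower_sum_le_lebesgue_integral[where f=f, OF \<nu> _ f f01] by (rule fa_integral_least[OF ne])
  show "integral\<^sup>L (ca_measure M \<nu>) f \<le> fa_integral M \<nu> f"
  proof (rule field_le_epsilon)
    fix e :: real assume e: "0 < e"
    obtain n :: nat where "\<nu> (space M) / e < real n"
      using reals_Archimedean2 by blast
    then have n: "\<nu> (space M) < e * real n"
      using e by (simp add: divide_less_eq mult.commute)
    moreover have "0 \<le> \<nu> (space M)"
      by (rule pos_fa_nonneg[OF pos_ca_imp_pos_fa[OF \<nu>] sets.top])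
    ultimately have "0 < e * real n" by linarith
    then have "0 < n"
      using e by (simp add: zero_less_mult_iff)
    then have "\<nu> (space M) / real n \<le> e"
      using n by (simp add: divide_le_eq)
    moreover have "integral\<^sup>L (ca_measure M \<nu>) f \<le> fa_integral M \<nu> f + \<nu> (space M) / real n"
      by (rule lebesgue_integral_le_fa_integral_plus[where f=f, OF \<nu> f f01 \<open>0 < n\<close>])
    ultimately show "integral\<^sup>L (ca_measure M \<nu>) f \<le> fa_integral M \<nu> f + e"
      by linarith
  qed
qed

lemma transition_functionD:
  assumes "transition_function M p"
  shows "\<And>x E. x \<in> space M \<Longrightarrow> E \<in> sets M \<Longrightarrow> p x E \<in> {0..1}"
    and "\<And>x. x \<in> space M \<Longrightarrow> p x (space M) = 1"
    and "\<And>E. E \<in> sets M \<Longrightarrow> (\<lambda>x. p x E) \<in> borel_measurable M"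
    and "\<And>x. x \<in> space M \<Longrightarrow> pos_ca M (p x)"
  using assms unfolding transition_function_def by simp_all

lemma markov_op_eq_lebesgue_integral:
  assumes "space M \<noteq> {}" "pos_ca M \<nu>" "transition_function M p" "E \<in> sets M"
  shows "markov_op M p \<nu> E = integral\<^sup>L (ca_measure M \<nu>) (\<lambda>x. p x E)"
  unfolding markov_op_def using assms transition_functionD(1,3)[OF assms(3)]
  by (intro fa_integral_eq_lebesgue_integral) auto

lemma integrable_transition_function:
  assumes \<nu>: "pos_ca M \<nu>" and p: "transition_function M p" and E: "E \<in> sets M"
  shows "integrable (ca_measure M \<nu>) (\<lambda>x. p x E)"
  using transition_functionD(1)[OF p _ E]
  by (intro integrable_ca_measure[OF \<nu> transition_functionD(3)[OF p E], where c=1]) auto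

lemma markov_op_pos_fa:
  assumes ne: "space M \<noteq> {}" and \<nu>: "pos_ca M \<nu>" and p: "transition_function M p"
  shows "pos_fa M (markov_op M p \<nu>)"
  unfolding pos_fa_def
proof (intro conjI ballI impI)
  let ?N = "ca_measure M \<nu>"
  note eq = markov_op_eq_lebesgue_integral[OF ne \<nu> p]
  have p_fa: "pos_fa M (p x)" if "x \<in> space M" for x
    by (rule pos_ca_imp_pos_fa[OF transition_functionD(4)[OF p that]])
  have "integral\<^sup>L ?N (\<lambda>x. p x {}) = integral\<^sup>L ?N (\<lambda>x. 0)"
    using pos_fa_empty[OF p_fa] by (intro Bochner_Integration.integral_cong) auto
  then show "markov_op M p \<nu> {} = 0"
    unfolding eq[OF sets.empty_sets] by simp
  show "0 \<le> markov_op M p \<nu> E" if "E \<in> sets M" for E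
    unfolding eq[OF that] using transition_functionD(1)[OF p _ that]
    by (intro Bochner_Integration.integral_nonneg) simp
  fix A B assume A: "A \<in> sets M" and B: "B \<in> sets M" and AB: "A \<inter> B = {}"
  have "integral\<^sup>L ?N (\<lambda>x. p x (A \<union> B)) = integral\<^sup>L ?N (\<lambda>x. p x A + p x B)"
    using pos_fa_Un[OF p_fa A B AB] by (intro Bochner_Integration.integral_cong) auto
  then show "markov_op M p \<nu> (A \<union> B) = markov_op M p \<nu> A + markov_op M p \<nu> B"
    using A B integrable_transition_function[OF \<nu> p] by (simp add: eq)
qed

lemma markov_op_sums:
  assumes ne: "space M \<noteq> {}" and \<nu>: "pos_ca M \<nu>" and p: "transition_function M p"
    and F: "range F \<subseteq> sets M" "disjoint_family F"
  shows "(\<lambda>n. markov_op M p \<nu> (F n)) sums markov_op M p \<nu> (\<Union>n. F n)"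
proof -
  let ?N = "ca_measure M \<nu>"
  note eq = markov_op_eq_lebesgue_integral[OF ne \<nu> p]
  have Fn: "F n \<in> sets M" for n using F by auto
  have U: "(\<Union>n. F n) \<in> sets M" using F by auto
  have partial_sums: "(\<Sum>n<i. markov_op M p \<nu> (F n)) = integral\<^sup>L ?N (\<lambda>x. \<Sum>n<i. p x (F n))" for i
    using integrable_transition_function[OF \<nu> p Fn] by (simp add: eq[OF Fn])
  have "(\<lambda>i. integral\<^sup>L ?N (\<lambda>x. \<Sum>n<i. p x (F n))) \<longlonglongrightarrow> integral\<^sup>L ?N (\<lambda>x. p x (\<Union>n. F n))"
  proof (rule integral_dominated_convergence[where w="\<lambda>x. 1"])
    show "(\<lambda>x. p x (\<Union>n. F n)) \<in> borel_measurable ?N"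
      using transition_functionD(3)[OF p U] by simp
    show "(\<lambda>x. \<Sum>n<i. p x (F n)) \<in> borel_measurable ?N" for i
      using transition_functionD(3)[OF p Fn] by simp
    show "integrable ?N (\<lambda>x. 1::real)"
      by (rule integrable_ca_measure[OF \<nu>, where c=1]) auto
    show "AE x in ?N. (\<lambda>i. \<Sum>n<i. p x (F n)) \<longlonglongrightarrow> p x (\<Union>n. F n)"
      using pos_ca_sums[OF transition_functionD(4)[OF p] F] by (intro AE_I2) (simp add: sums_def)
    show "AE x in ?N. norm (\<Sum>n<i. p x (F n)) \<le> 1" for i
    proof (rule AE_I2)
      fix x assume "x \<in> space ?N"
      then have x: "x \<in> space M" by simp
      have "(\<Sum>n<i. p x (F n)) = p x (\<Union>n<i. F n)"
        by (rule pos_fa_partial_sum[OF pos_ca_imp_pos_fa[OF transition_functionD(4)[OF p x]] F])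
      moreover have "(\<Union>n<i. F n) \<in> sets M" using Fn by auto
      ultimately show "norm (\<Sum>n<i. p x (F n)) \<le> 1"
        using transition_functionD(1)[OF p x] by simp
    qed
  qed
  then show ?thesis
    unfolding sums_def partial_sums eq[OF U] .
qed

lemma markov_op_pos_ca:
  assumes "space M \<noteq> {}" "pos_ca M \<nu>" "transition_function M p"
  shows "pos_ca M (markov_op M p \<nu>)"
  unfolding pos_ca_def count_add_def using assms by (blast intro: markov_op_pos_fa markov_op_sums)

lemma markov_op_add_measure:
  assumes ne: "space M \<noteq> {}" and p: "transition_function M p"
    and \<nu>1: "pos_fa M \<nu>1" and \<nu>2: "pos_fa M \<nu>2" and \<nu>: "\<And>E. E \<in> sets M \<Longrightarrow> \<nu> E = \<nu>1 E + \<nu>2 E"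
    and E: "E \<in> sets M"
  shows "markov_op M p \<nu> E = markov_op M p \<nu>1 E + markov_op M p \<nu>2 E"
  unfolding markov_op_def using transition_functionD(1)[OF p _ E]
  by (intro fa_integral_add_measure[OF ne \<nu>1 \<nu>2 \<nu>])

lemma markov_op_nonneg:
  assumes "space M \<noteq> {}" "transition_function M p" "pos_fa M \<nu>" "E \<in> sets M"
  shows "0 \<le> markov_op M p \<nu> E"
  unfolding markov_op_def using assms transition_functionD(1)[OF assms(2) _ assms(4)]
  by (intro fa_integral_nonneg)

lemma markov_op_space:
  assumes "space M \<noteq> {}" "transition_function M p" "pos_fa M \<nu>"
  shows "markov_op M p \<nu> (space M) = \<nu> (space M)"
  unfolding markov_op_def using assms transition_functionD(2)[OF assms(2)]
  by (intro fa_integral_one)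

lemma sum_lessThan_rotate: "(\<Sum>i<m. g (Suc i mod m)) = (\<Sum>i<m. g i)"
proof (cases m)
  case (Suc n)
  have "(\<Sum>i<Suc n. g (Suc i mod Suc n)) = (\<Sum>i<n. g (Suc i)) + g 0"
    by (simp add: sum.lessThan_Suc)
  also have "\<dots> = (\<Sum>i<Suc n. g i)"
    unfolding sum.lessThan_Suc_shift by (simp add: add.commute)
  finally show ?thesis using Suc by simp
qed simp

\<comment> \<open>Each T i pushes the mass of \<nu> i below \<nu> (i + 1); going once around the cycle,
  no mass can be lost, so all the inequalities are equalities.\<close>
lemma cyclic_dominated_eq:
  fixes T \<nu> :: "nat \<Rightarrow> 'a set \<Rightarrow> real"
  assumes \<nu>: "\<And>i. i < m \<Longrightarrow> pos_fa M (\<nu> i)" and T: "\<And>i. i < m \<Longrightarrow> pos_fa M (T i)"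
    and le: "\<And>i E. i < m \<Longrightarrow> E \<in> sets M \<Longrightarrow> T i E \<le> \<nu> (Suc i mod m) E"
    and mass: "\<And>i. i < m \<Longrightarrow> T i (space M) = \<nu> i (space M)"
    and i: "i < m" and E: "E \<in> sets M"
  shows "T i E = \<nu> (Suc i mod m) E"
proof -
  let ?gap = "\<lambda>j. \<nu> (Suc j mod m) (space M) - T j (space M)"
  have "sum ?gap {..<m} = 0"
    using sum_lessThan_rotate[of "\<lambda>j. \<nu> j (space M)" m] mass by (simp add: sum_subtractf)
  moreover have "0 \<le> ?gap j" if "j \<in> {..<m}" for j
    using le[OF _ sets.top] that by simp
  ultimately have "\<forall>j\<in>{..<m}. ?gap j = 0"
    using sum_nonneg_eq_0_iff[OF finite_lessThan, where f="?gap"] by blast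
  then have total: "T i (space M) = \<nu> (Suc i mod m) (space M)"
    using i by simp
  have Ec: "space M - E \<in> sets M" using E by blast
  have "Suc i mod m < m" using i by simp
  then show ?thesis
    using pos_fa_compl[OF T[OF i] E] pos_fa_compl[OF \<nu>[OF \<open>Suc i mod m < m\<close>] E] le[OF i E] le[OF i Ec] total
    by linarith
qed

lemma cyclic_rel_ca_part:
  assumes ne: "space M \<noteq> {}" and p: "transition_function M p" and cyc: "cyclic_rel M p m \<mu>"
    and ca: "\<And>i. i < m \<Longrightarrow> pos_ca M (\<mu>ca i)" and pfa: "\<And>i. i < m \<Longrightarrow> pos_pfa M (\<mu>pfa i)"
    and decomp: "\<And>i E. i < m \<Longrightarrow> E \<in> sets M \<Longrightarrow> \<mu> i E = \<mu>ca i E + \<mu>pfa i E"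
  shows "cyclic_rel M p m \<mu>ca"
  unfolding cyclic_rel_def
proof (intro allI impI ballI)
  fix i E assume i: "i < m" and E: "E \<in> sets M"
  have ca_fa: "pos_fa M (\<mu>ca j)" and pfa_fa: "pos_fa M (\<mu>pfa j)" if "j < m" for j
    using ca pfa that by (auto intro: pos_ca_imp_pos_fa pos_pfa_imp_pos_fa)
  have le: "markov_op M p (\<mu>ca j) E' \<le> \<mu>ca (Suc j mod m) E'" if j: "j < m" and E': "E' \<in> sets M" for j E'
  proof (rule pos_ca_le_drop_pfa[OF markov_op_pos_ca[OF ne ca[OF j] p] pfa ca_fa _ E'])
    fix E assume E: "E \<in> sets M"
    have "markov_op M p (\<mu> j) E = markov_op M p (\<mu>ca j) E + markov_op M p (\<mu>pfa j) E"
      using decomp[OF j] by (intro markov_op_add_measure[OF ne p ca_fa[OF j] pfa_fa[OF j] _ E])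
    moreover have "0 \<le> markov_op M p (\<mu>pfa j) E"
      by (rule markov_op_nonneg[OF ne p pfa_fa[OF j] E])
    moreover have "markov_op M p (\<mu> j) E = \<mu> (Suc j mod m) E"
      using cyc j E unfolding cyclic_rel_def by blast
    moreover have "Suc j mod m < m" using j by simp
    ultimately show "markov_op M p (\<mu>ca j) E \<le> \<mu>pfa (Suc j mod m) E + \<mu>ca (Suc j mod m) E"
      using decomp[of "Suc j mod m" E] E by simp
  qed (use j in simp_all)
  have T_fa: "pos_fa M (markov_op M p (\<mu>ca j))" if "j < m" for j
    by (rule pos_ca_imp_pos_fa[OF markov_op_pos_ca[OF ne ca[OF that] p]])
  show "markov_op M p (\<mu>ca i) E = \<mu>ca (Suc i mod m) E"
    by (rule cyclic_dominated_eq[where T="\<lambda>j. markov_op M p (\<mu>ca j)", OF ca_fa T_fa le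
          markov_op_space[OF ne p ca_fa] i E])
qed

lemma cyclic_rel_diff:
  assumes ne: "space M \<noteq> {}" and p: "transition_function M p"
    and cyc: "cyclic_rel M p m \<mu>" and cyc1: "cyclic_rel M p m \<nu>1"
    and fa: "\<And>i. i < m \<Longrightarrow> pos_fa M (\<nu>1 i)" "\<And>i. i < m \<Longrightarrow> pos_fa M (\<nu>2 i)"
    and decomp: "\<And>i E. i < m \<Longrightarrow> E \<in> sets M \<Longrightarrow> \<mu> i E = \<nu>1 i E + \<nu>2 i E"
  shows "cyclic_rel M p m \<nu>2"
  unfolding cyclic_rel_def
proof (intro allI impI ballI)
  fix i E assume i: "i < m" and E: "E \<in> sets M"
  have "markov_op M p (\<mu> i) E = markov_op M p (\<nu>1 i) E + markov_op M p (\<nu>2 i) E"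
    using decomp[OF i] by (intro markov_op_add_measure[OF ne p fa(1)[OF i] fa(2)[OF i] _ E])
  moreover have "markov_op M p (\<mu> i) E = \<mu> (Suc i mod m) E"
    "markov_op M p (\<nu>1 i) E = \<nu>1 (Suc i mod m) E"
    using cyc cyc1 i E unfolding cyclic_rel_def by blast+
  moreover have "Suc i mod m < m" using i by simp
  ultimately show "markov_op M p (\<nu>2 i) E = \<nu>2 (Suc i mod m) E"
    using decomp[of "Suc i mod m" E] E by simp
qed

lemma mean_measure_eq_cmult: "mean_measure m \<mu> = (\<lambda>E. inverse (real m) * (\<Sum>k<m. \<mu> k E))"
  unfolding mean_measure_def by (simp add: field_simps)

lemma pos_ca_mean_measure: "(\<And>k. k < m \<Longrightarrow> pos_ca M (\<mu> k)) \<Longrightarrow> pos_ca M (mean_measure m \<mu>)"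
  unfolding mean_measure_eq_cmult by (intro pos_ca_cmult pos_ca_sum) auto

lemma pos_pfa_mean_measure: "(\<And>k. k < m \<Longrightarrow> pos_pfa M (\<mu> k)) \<Longrightarrow> pos_pfa M (mean_measure m \<mu>)"
  unfolding mean_measure_eq_cmult by (intro pos_pfa_cmult pos_pfa_sum) auto

lemma mean_measure_add:
  "(\<And>k. k < m \<Longrightarrow> \<mu> k E = \<nu>1 k E + \<nu>2 k E) \<Longrightarrow> mean_measure m \<mu> E = mean_measure m \<nu>1 E + mean_measure m \<nu>2 E"
  unfolding mean_measure_def by (simp add: sum.distrib add_divide_distrib)

lemma mean_measure_decomposition_unique:
  assumes ca: "\<And>k. k < m \<Longrightarrow> pos_ca M (\<mu>ca k)" and pfa: "\<And>k. k < m \<Longrightarrow> pos_pfa M (\<mu>pfa k)"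
    and decomp: "\<And>k E. k < m \<Longrightarrow> E \<in> sets M \<Longrightarrow> \<mu> k E = \<mu>ca k E + \<mu>pfa k E"
  shows "\<forall>\<nu>1 \<nu>2. pos_ca M \<nu>1 \<and> pos_pfa M \<nu>2 \<and> (\<forall>E\<in>sets M. mean_measure m \<mu> E = \<nu>1 E + \<nu>2 E)
      \<longrightarrow> (\<forall>E\<in>sets M. \<nu>1 E = mean_measure m \<mu>ca E \<and> \<nu>2 E = mean_measure m \<mu>pfa E)"
proof (intro allI impI ballI)
  fix \<nu>1 \<nu>2 E
  assume \<nu>: "pos_ca M \<nu>1 \<and> pos_pfa M \<nu>2 \<and> (\<forall>E\<in>sets M. mean_measure m \<mu> E = \<nu>1 E + \<nu>2 E)"
    and E: "E \<in> sets M"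
  have \<nu>1: "pos_ca M \<nu>1" and \<nu>2: "pos_pfa M \<nu>2" using \<nu> by simp_all
  have "mean_measure m \<mu>ca E' + mean_measure m \<mu>pfa E' = \<nu>1 E' + \<nu>2 E'" if E': "E' \<in> sets M" for E'
  proof -
    have "mean_measure m \<mu> E' = mean_measure m \<mu>ca E' + mean_measure m \<mu>pfa E'"
      using decomp[OF _ E'] by (rule mean_measure_add)
    then show ?thesis using \<nu> E' by simp
  qed
  then show "\<nu>1 E = mean_measure m \<mu>ca E \<and> \<nu>2 E = mean_measure m \<mu>pfa E"
    using ca_pfa_decomposition_unique[OF pos_ca_mean_measure[OF ca] pos_pfa_mean_measure[OF pfa] \<nu>1 \<nu>2 _ E]
    by simp
qed

lemma fa_disjoint_summands:
  assumes disj: "fa_disjoint M \<mu> \<mu>'"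
    and fa: "pos_fa M \<kappa>" "pos_fa M \<rho>" "pos_fa M \<kappa>'" "pos_fa M \<rho>'"
    and \<mu>: "\<And>E. E \<in> sets M \<Longrightarrow> \<mu> E = \<kappa> E + \<rho> E" and \<mu>': "\<And>E. E \<in> sets M \<Longrightarrow> \<mu>' E = \<kappa>' E + \<rho>' E"
  shows "fa_disjoint M \<kappa> \<kappa>'" "fa_disjoint M \<rho> \<rho>'"
proof -
  have le: "\<kappa> E \<le> \<mu> E" "\<rho> E \<le> \<mu> E" "\<kappa>' E \<le> \<mu>' E" "\<rho>' E \<le> \<mu>' E" if "E \<in> sets M" for E
    using \<mu>[OF that] \<mu>'[OF that] pos_fa_nonneg[OF fa(1) that] pos_fa_nonneg[OF fa(2) that]
      pos_fa_nonneg[OF fa(3) that] pos_fa_nonneg[OF fa(4) that]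
    by linarith+
  show "fa_disjoint M \<kappa> \<kappa>'" by (rule fa_disjoint_mono[OF disj fa(1) fa(3) le(1) le(3)])
  show "fa_disjoint M \<rho> \<rho>'" by (rule fa_disjoint_mono[OF disj fa(2) fa(4) le(2) le(4)])
qed

lemma pairwise_fa_disjoint_components:
  assumes disj: "\<forall>i<m. \<forall>j<m. i \<noteq> j \<longrightarrow> fa_disjoint M (\<mu> i) (\<mu> j)"
    and ca: "\<And>i. i < m \<Longrightarrow> pos_ca M (\<mu>ca i)" and pfa: "\<And>i. i < m \<Longrightarrow> pos_pfa M (\<mu>pfa i)"
    and decomp: "\<And>i E. i < m \<Longrightarrow> E \<in> sets M \<Longrightarrow> \<mu> i E = \<mu>ca i E + \<mu>pfa i E"
  shows "\<forall>i<m. \<forall>j<m. i \<noteq> j \<longrightarrow> fa_disjoint M (\<mu>ca i) (\<mu>ca j)"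
    and "\<forall>i<m. \<forall>j<m. i \<noteq> j \<longrightarrow> fa_disjoint M (\<mu>pfa i) (\<mu>pfa j)"
    and "\<forall>i<m. \<forall>j<m. fa_disjoint M (\<mu>ca i) (\<mu>pfa j)"
proof -
  have ca_fa: "\<And>i. i < m \<Longrightarrow> pos_fa M (\<mu>ca i)" and pfa_fa: "\<And>i. i < m \<Longrightarrow> pos_fa M (\<mu>pfa i)"
    using ca pfa by (auto intro: pos_ca_imp_pos_fa pos_pfa_imp_pos_fa)
  have summands: "fa_disjoint M (\<mu>ca i) (\<mu>ca j) \<and> fa_disjoint M (\<mu>pfa i) (\<mu>pfa j)"
    if ij: "i < m" "j < m" "i \<noteq> j" for i j
  proof -
    have "\<And>E. E \<in> sets M \<Longrightarrow> \<mu> i E = \<mu>ca i E + \<mu>pfa i E"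
      "\<And>E. E \<in> sets M \<Longrightarrow> \<mu> j E = \<mu>ca j E + \<mu>pfa j E"
      using decomp ij by auto
    note parts = fa_disjoint_summands[OF disj[rule_format, OF ij] ca_fa[OF ij(1)] pfa_fa[OF ij(1)]
        ca_fa[OF ij(2)] pfa_fa[OF ij(2)] this]
    show ?thesis using parts(1) parts(2) by (rule conjI)
  qed
  then show "\<forall>i<m. \<forall>j<m. i \<noteq> j \<longrightarrow> fa_disjoint M (\<mu>ca i) (\<mu>ca j)"
    and "\<forall>i<m. \<forall>j<m. i \<noteq> j \<longrightarrow> fa_disjoint M (\<mu>pfa i) (\<mu>pfa j)"
    by simp_all
  show "\<forall>i<m. \<forall>j<m. fa_disjoint M (\<mu>ca i) (\<mu>pfa j)"
    using ca pfa by (simp add: fa_disjoint_ca_pfa)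
qed

theorem theorem4p4:
  fixes M :: "'a measure" and p :: "'a \<Rightarrow> 'a set \<Rightarrow> real" and m :: nat
    and \<mu> \<mu>ca \<mu>pfa :: "nat \<Rightarrow> 'a set \<Rightarrow> real"
  assumes X_inf: "infinite (space M)"
    and singletons: "\<forall>x\<in>space M. {x} \<in> sets M"
    and trans: "transition_function M p"
    and cycle: "fa_cycle M p m \<mu>"
    and disj: "\<forall>i<m. \<forall>j<m. i \<noteq> j \<longrightarrow> fa_disjoint M (\<mu> i) (\<mu> j)"
    and ca: "\<forall>i<m. pos_ca M (\<mu>ca i)"
    and pfa: "\<forall>i<m. pos_pfa M (\<mu>pfa i)"
    and decomp: "\<forall>i<m. \<forall>E\<in>sets M. \<mu> i E = \<mu>ca i E + \<mu>pfa i E"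
  shows "cyclic_rel M p m \<mu>ca \<and> cyclic_rel M p m \<mu>pfa
    \<and> (\<forall>i<m. \<forall>E\<in>sets M. \<mu> i E = \<mu>ca i E + \<mu>pfa i E)
    \<and> pos_ca M (mean_measure m \<mu>ca) \<and> pos_pfa M (mean_measure m \<mu>pfa)
    \<and> (\<forall>E\<in>sets M. mean_measure m \<mu> E = mean_measure m \<mu>ca E + mean_measure m \<mu>pfa E)
    \<and> (\<forall>\<nu>1 \<nu>2. pos_ca M \<nu>1 \<and> pos_pfa M \<nu>2
          \<and> (\<forall>E\<in>sets M. mean_measure m \<mu> E = \<nu>1 E + \<nu>2 E)
        \<longrightarrow> (\<forall>E\<in>sets M. \<nu>1 E = mean_measure m \<mu>ca E \<and> \<nu>2 E = mean_measure m \<mu>pfa E))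
    \<and> (\<forall>i<m. \<forall>j<m. i \<noteq> j \<longrightarrow> fa_disjoint M (\<mu>ca i) (\<mu>ca j))
    \<and> (\<forall>i<m. \<forall>j<m. i \<noteq> j \<longrightarrow> fa_disjoint M (\<mu>pfa i) (\<mu>pfa j))
    \<and> (\<forall>i<m. \<forall>j<m. fa_disjoint M (\<mu>ca i) (\<mu>pfa j))"
proof -
  have ne: "space M \<noteq> {}" using X_inf by auto
  have cyc: "cyclic_rel M p m \<mu>" using cycle unfolding fa_cycle_def by simp
  have ca': "\<And>i. i < m \<Longrightarrow> pos_ca M (\<mu>ca i)" and pfa': "\<And>i. i < m \<Longrightarrow> pos_pfa M (\<mu>pfa i)"
    and decomp': "\<And>i E. i < m \<Longrightarrow> E \<in> sets M \<Longrightarrow> \<mu> i E = \<mu>ca i E + \<mu>pfa i E"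
    using ca pfa decomp by auto
  have cyc_ca: "cyclic_rel M p m \<mu>ca"
    by (rule cyclic_rel_ca_part[OF ne trans cyc ca' pfa' decomp'])
  have cyc_pfa: "cyclic_rel M p m \<mu>pfa"
    using ca' pfa' by (intro cyclic_rel_diff[OF ne trans cyc cyc_ca _ _ decomp'])
      (auto intro: pos_ca_imp_pos_fa pos_pfa_imp_pos_fa)
  have mean: "\<forall>E\<in>sets M. mean_measure m \<mu> E = mean_measure m \<mu>ca E + mean_measure m \<mu>pfa E"
    using decomp' by (auto intro: mean_measure_add)
  show ?thesis
    by (intro conjI cyc_ca cyc_pfa decomp mean pos_ca_mean_measure[OF ca'] pos_pfa_mean_measure[OF pfa']
        mean_measure_decomposition_unique[OF ca' pfa' decomp']
        pairwise_fa_disjoint_components[OF disj ca' pfa' decomp'])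
qed

end
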